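(* Let $\mu>1/2$, $0<\nu<1/2$. (1) For every $g\in X$ and all $x\in\mathbb{R}$, $$|h^{-1}(x)|\le \tfrac1\nu |x|^\nu(x^2+1)^{\frac12(\mu-\nu)}e^{\|g\|_\infty},$$ $$|h^{-1}(x)|\ge e^{-(\mu-1)}|x|^\nu(x^2+1)^{\frac12(\mu-\nu)}e^{\fint_0^x g}\ge e^{-(\mu-1)}|x|^\nu(x^2+1)^{\frac12(\mu-\nu)}e^{-\|g\|_\infty}.$$ (2) For every $g\in X_1$ and all $x\in\mathbb{R}\setminus\{0\}$, $$e^{1-\nu-6(\mu-\nu)}|x|^{\nu-1}(x^2+1)^{\frac12(\mu-\nu)}e^{g(x)}\le \frac{h^{-1}(x)}{x}\le \tfrac1\nu |x|^{\nu-1}(x^2+1)^{\frac12(\mu-\nu)}e^{g(x)}.$$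
   Context: $X=\{g\in C(\mathbb{R})\cap L^\infty(\mathbb{R}) \text{ real}:\ \lim_{x\to\pm\infty}g(x)=0\}$ with norm $\|g\|_\infty$. For $g\in X$ let $G(x)=g(x)+\frac12(\mu-\nu)\ln(x^2+1)$, and $X_1=\{g\in X: G\text{ is even and }0\le G(x)-G(y)\le(\mu-\nu)(\ln\frac xy+2)\text{ for all }0\le y\le x\}$ (the upper bound being vacuous when $y=0$). For $g\in X$, $h^{-1}:\mathbb{R}\to\mathbb{R}$ is defined by $h^{-1}(0)=0$, $(h^{-1})'(x)=|x|^{\nu-1}(x^2+1)^{(\mu-\nu)/2}e^{g(x)}$ ($x\ne0$). For an interval $I$, $\fint_I g=\frac1{|I|}\int_I g$, and $\fint_0^x g$ denotes the average of $g$ over the interval with endpoints $0$ and $x$. *)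

theory Defs
  imports "HOL-Analysis.Analysis"
begin

definition spaceX :: "(real \<Rightarrow> real) set" where
  "spaceX = {g. continuous_on UNIV g \<and> bounded (range g) \<and>
                (g \<longlongrightarrow> 0) at_top \<and> (g \<longlongrightarrow> 0) at_bot}"

definition supnorm :: "(real \<Rightarrow> real) \<Rightarrow> real" where
  "supnorm g = (SUP x. \<bar>g x\<bar>)"

definition bigG :: "real \<Rightarrow> real \<Rightarrow> (real \<Rightarrow> real) \<Rightarrow> real \<Rightarrow> real" where
  "bigG \<mu> \<nu> g x = g x + (1/2) * (\<mu> - \<nu>) * ln (x\<^sup>2 + 1)"

definition spaceX1 :: "real \<Rightarrow> real \<Rightarrow> (real \<Rightarrow> real) set" where
  "spaceX1 \<mu> \<nu> = {g \<in> spaceX.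
     (\<forall>x. bigG \<mu> \<nu> g (-x) = bigG \<mu> \<nu> g x) \<and>
     (\<forall>x y. 0 \<le> y \<and> y \<le> x \<longrightarrow> 0 \<le> bigG \<mu> \<nu> g x - bigG \<mu> \<nu> g y) \<and>
     (\<forall>x y. 0 < y \<and> y \<le> x \<longrightarrow>
        bigG \<mu> \<nu> g x - bigG \<mu> \<nu> g y \<le> (\<mu> - \<nu>) * (ln (x / y) + 2))}"

text \<open>h^{-1}: h^{-1}(0)=0 with derivative |x|^(nu-1)(x^2+1)^((mu-nu)/2) e^(g x) off 0,
  i.e. the oriented integral from 0 to x of that density.\<close>
definition hinv :: "real \<Rightarrow> real \<Rightarrow> (real \<Rightarrow> real) \<Rightarrow> real \<Rightarrow> real" where
  "hinv \<mu> \<nu> g x = (LBINT t=ereal 0..ereal x.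
      \<bar>t\<bar> powr (\<nu> - 1) * (t\<^sup>2 + 1) powr ((\<mu> - \<nu>) / 2) * exp (g t))"

definition avg0 :: "(real \<Rightarrow> real) \<Rightarrow> real \<Rightarrow> real" where
  "avg0 g x = (if x = 0 then g 0 else (LBINT t=ereal 0..ereal x. g t) / x)"

end

theory Submission
  imports Defs "HOL-Real_Asymp.Real_Asymp"
begin

(* Write f = hdens mu nu g, f(t) = |t|^(nu-1) (t^2+1)^((mu-nu)/2) e^(g t), for the
   density of h^{-1}; for t > 0 it equals t^(nu-1) e^(G t).  Reflecting t |-> -t reduces every claim to
   x = X > 0, where h^{-1}(X) is the integral of f over (0,X).  Each bound then comes
   from a pointwise comparison of f on (0,X), integrated with the model integrals
   int_0^X t^(a-1) dt = X^a/a  and  int_0^X -ln(t/X) dt = X: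
   - f(t) <= B t^(nu-1) gives the upper bounds, with B = (X^2+1)^((mu-nu)/2) e^(sup g)
     in part (1) and B = e^(G X) in part (2), where G is monotone;
   - f(t) >= e^(G X - (mu-nu)(ln X + 2)) t^(mu-1), from the growth bound on G, gives
     the lower bound of part (2);
   - ln f(t) >= K + (mu-1) ln(t/X) + g(t), because ln(t^2+1) - 2 ln t is decreasing,
     together with Jensen's inequality for exp gives the lower bound of part (1). *)

section \<open>The density of \<open>hinv\<close>\<close>

definition hdens :: "real \<Rightarrow> real \<Rightarrow> (real \<Rightarrow> real) \<Rightarrow> real \<Rightarrow> real" where
  "hdens \<mu> \<nu> g t = \<bar>t\<bar> powr (\<nu> - 1) * (t\<^sup>2 + 1) powr ((\<mu> - \<nu>) / 2) * exp (g t)"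

lemma hinv_eq_set_integral:
  assumes "X > 0"
  shows "hinv \<mu> \<nu> g X = (LINT t:{0<..<X}|lborel. hdens \<mu> \<nu> g t)"
  using assms unfolding hinv_def hdens_def by (subst interval_integral_Ioo) auto

lemma avg0_eq_set_integral:
  assumes "X > 0"
  shows "avg0 g X = (LINT t:{0<..<X}|lborel. g t) / X"
  using assms unfolding avg0_def by (subst interval_integral_Ioo) auto

text \<open>The weight \<open>(t\<^sup>2 + 1) powr ((\<mu> - \<nu>)/2) * exp (g t)\<close> equals \<open>exp (G t)\<close>;
  this is how the hypotheses on \<open>G\<close> enter.\<close>

lemma weight_eq_exp_bigG:
  "(t\<^sup>2 + 1) powr ((\<mu> - \<nu>) / 2) * exp (g t) = exp (bigG \<mu> \<nu> g t)"
  using zero_le_power2[of t]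
  by (simp add: powr_def exp_add bigG_def mult_ac add_nonneg_eq_0_iff)

lemma hdens_eq_exp_bigG:
  assumes "t > 0"
  shows "hdens \<mu> \<nu> g t = t powr (\<nu> - 1) * exp (bigG \<mu> \<nu> g t)"
  using assms weight_eq_exp_bigG[of t \<mu> \<nu> g] by (simp add: hdens_def mult.assoc)

section \<open>Two model integrals\<close>

lemma powr_set_integral:
  fixes a X :: real assumes a: "a > 0" and X: "X > 0"
  shows "set_integrable lborel {0<..<X} (\<lambda>t. t powr (a - 1))"
    and "(LINT t:{0<..<X}|lborel. t powr (a - 1)) = X powr a / a"
proof -
  let ?F = "\<lambda>t::real. t powr a / a"
  have D: "DERIV ?F t :> t powr (a - 1)" if "ereal 0 < ereal t" "ereal t < ereal X" for t
  proof -
    have "((\<lambda>z. z powr a) has_real_derivative a * t powr (a - 1)) (at t)"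
      using that by (intro has_real_derivative_powr) auto
    then have "DERIV ?F t :> a * t powr (a - 1) / a" by (rule DERIV_cdivide)
    then show ?thesis using a by simp
  qed
  have C: "isCont (\<lambda>t. t powr (a - 1)) t" if "ereal 0 < ereal t" "ereal t < ereal X" for t
    using that by (auto intro!: continuous_intros)
  have A: "((?F \<circ> real_of_ereal) \<longlongrightarrow> 0) (at_right (ereal 0))"
    unfolding ereal_tendsto_simps1 using a by real_asymp
  have B: "((?F \<circ> real_of_ereal) \<longlongrightarrow> X powr a / a) (at_left (ereal X))"
    unfolding ereal_tendsto_simps1
    using X a by (intro tendsto_intros continuous_imp_tendsto) (auto intro!: continuous_intros)
  have "set_integrable lborel (einterval (ereal 0) (ereal X)) (\<lambda>t. t powr (a - 1))"
       "(LBINT t=ereal 0..ereal X. t powr (a - 1)) = X powr a / a - 0"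
    by (rule interval_integral_FTC_nonneg[OF _ D C _ A B]; use X in auto)+
  then show "set_integrable lborel {0<..<X} (\<lambda>t. t powr (a - 1))"
    and "(LINT t:{0<..<X}|lborel. t powr (a - 1)) = X powr a / a"
    using X by (simp_all add: interval_integral_Ioo)
qed

lemma neg_ln_set_integral:
  fixes X :: real assumes X: "X > 0"
  shows "set_integrable lborel {0<..<X} (\<lambda>t. - ln (t / X))"
    and "(LINT t:{0<..<X}|lborel. - ln (t / X)) = X"
proof -
  let ?F = "\<lambda>t::real. t - t * ln (t / X)"
  have D: "DERIV ?F t :> - ln (t / X)" if "ereal 0 < ereal t" "ereal t < ereal X" for t
  proof -
    have "DERIV ?F t :> 1 - (1 * ln (t / X) + t * ((1 / X) / (t / X)))"
      using that X by (intro derivative_eq_intros) auto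
    then show ?thesis using that X by simp
  qed
  have C: "isCont (\<lambda>t. - ln (t / X)) t" if "ereal 0 < ereal t" "ereal t < ereal X" for t
    using that X by (auto intro!: continuous_intros)
  have N: "AE t in lborel. ereal 0 < ereal t \<longrightarrow> ereal t < ereal X \<longrightarrow> 0 \<le> - ln (t / X)"
    using X by (intro AE_I2) (auto simp: ln_le_zero_iff)
  have A: "((?F \<circ> real_of_ereal) \<longlongrightarrow> 0) (at_right (ereal 0))"
    unfolding ereal_tendsto_simps1 using X by real_asymp
  have "isCont ?F X" using X by (auto intro!: continuous_intros)
  then have "(?F \<longlongrightarrow> ?F X) (at_left X)"
    by (simp add: isCont_def filterlim_at_split)
  then have B: "((?F \<circ> real_of_ereal) \<longlongrightarrow> X) (at_left (ereal X))"
    unfolding ereal_tendsto_simps1 using X by simp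
  have "set_integrable lborel (einterval (ereal 0) (ereal X)) (\<lambda>t. - ln (t / X))"
       "(LBINT t=ereal 0..ereal X. - ln (t / X)) = X - 0"
    by (rule interval_integral_FTC_nonneg[OF _ D C N A B]; use X in auto)+
  then show "set_integrable lborel {0<..<X} (\<lambda>t. - ln (t / X))"
    and "(LINT t:{0<..<X}|lborel. - ln (t / X)) = X"
    using X by (simp_all add: interval_integral_Ioo)
qed

lemma continuous_set_integrable_Ioo:
  fixes g :: "real \<Rightarrow> real"
  assumes "continuous_on UNIV g"
  shows "set_integrable lborel {a<..<b} g"
  by (rule set_integrable_subset[OF borel_integrable_atLeastAtMost'[of a b]])
    (auto intro: continuous_on_subset[OF assms])


lemma set_integral_le_powr:
  fixes f :: "real \<Rightarrow> real"
  assumes a: "a > 0" and X: "X > 0" and f: "set_integrable lborel {0<..<X} f"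
    and le: "\<And>t. 0 < t \<Longrightarrow> t < X \<Longrightarrow> f t \<le> B * t powr (a - 1)"
  shows "(LINT t:{0<..<X}|lborel. f t) \<le> B * (X powr a / a)"
proof -
  have "(LINT t:{0<..<X}|lborel. f t) \<le> (LINT t:{0<..<X}|lborel. B * t powr (a - 1))"
    using powr_set_integral(1)[OF a X] by (intro set_integral_mono[OF f]) (auto intro: le)
  also have "\<dots> = B * (X powr a / a)" using powr_set_integral(2)[OF a X] by simp
  finally show ?thesis .
qed

lemma set_integral_ge_powr:
  fixes f :: "real \<Rightarrow> real"
  assumes a: "a > 0" and X: "X > 0" and f: "set_integrable lborel {0<..<X} f"
    and ge: "\<And>t. 0 < t \<Longrightarrow> t < X \<Longrightarrow> B * t powr (a - 1) \<le> f t"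
  shows "B * (X powr a / a) \<le> (LINT t:{0<..<X}|lborel. f t)"
proof -
  have "B * (X powr a / a) = (LINT t:{0<..<X}|lborel. B * t powr (a - 1))"
    using powr_set_integral(2)[OF a X] by simp
  also have "\<dots> \<le> (LINT t:{0<..<X}|lborel. f t)"
    using powr_set_integral(1)[OF a X] by (intro set_integral_mono[OF _ f]) (auto intro: ge)
  finally show ?thesis .
qed

text \<open>It follows by integrating
  the tangent line \<open>exp y \<ge> exp m (1 + y - m)\<close> at the mean \<open>m\<close> of \<open>\<phi>\<close>.\<close>

lemma exp_average_le_set_integral:
  fixes M :: "'a measure" and \<phi> f :: "'a \<Rightarrow> real"
  assumes A: "A \<in> sets M" "emeasure M A < \<infinity>" "measure M A > 0"
    and \<phi>: "set_integrable M A \<phi>" and f: "set_integrable M A f"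
    and le: "\<And>t. t \<in> A \<Longrightarrow> exp (\<phi> t) \<le> f t"
  shows "measure M A * exp ((LINT t:A|M. \<phi> t) / measure M A) \<le> (LINT t:A|M. f t)"
proof -
  define m where "m = (LINT t:A|M. \<phi> t) / measure M A"
  have tangent: "exp m * (1 - m) + exp m * \<phi> t \<le> f t" if "t \<in> A" for t
  proof -
    have "exp m * (1 + (\<phi> t - m)) \<le> exp m * exp (\<phi> t - m)"
      by (intro mult_left_mono exp_ge_add_one_self) auto
    also have "\<dots> = exp (\<phi> t)" by (simp add: exp_diff)
    finally show ?thesis using le[OF that] by (simp add: algebra_simps)
  qed
  have const: "set_integrable M A (\<lambda>t. exp m * (1 - m))"
    using A unfolding set_integrable_def by auto
  have "measure M A * exp m = measure M A * (exp m * (1 - m)) + exp m * (LINT t:A|M. \<phi> t)"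
    using A by (simp add: m_def field_simps)
  also have "\<dots> = (LINT t:A|M. exp m * (1 - m)) + (LINT t:A|M. exp m * \<phi> t)"
    using A by (simp add: set_integral_const)
  also have "\<dots> = (LINT t:A|M. exp m * (1 - m) + exp m * \<phi> t)"
    using const \<phi> by (simp add: set_integral_add)
  also have "\<dots> \<le> (LINT t:A|M. f t)"
    using const \<phi> by (intro set_integral_mono[OF _ f] tangent) auto
  finally show ?thesis unfolding m_def .
qed

section \<open>Bounds for positive arguments\<close>

lemma hdens_nonneg: "0 \<le> hdens \<mu> \<nu> g t"
  by (simp add: hdens_def)

text \<open>Crude pointwise bound: on \<open>(0,X]\<close> the weight is largest at \<open>X\<close>.\<close>

lemma hdens_le_powr:
  assumes "0 < t" "t \<le> X" "\<nu> \<le> \<mu>" "g t \<le> S"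
  shows "hdens \<mu> \<nu> g t \<le> ((X\<^sup>2 + 1) powr ((\<mu> - \<nu>) / 2) * exp S) * t powr (\<nu> - 1)"
proof -
  have "(t\<^sup>2 + 1) powr ((\<mu> - \<nu>) / 2) \<le> (X\<^sup>2 + 1) powr ((\<mu> - \<nu>) / 2)"
    using assms by (intro powr_mono2) (auto intro!: power_mono)
  moreover have "exp (g t) \<le> exp S" using assms by simp
  ultimately have "hdens \<mu> \<nu> g t \<le> t powr (\<nu> - 1) * ((X\<^sup>2 + 1) powr ((\<mu> - \<nu>) / 2) * exp S)"
    using assms unfolding hdens_def by (simp add: mult.assoc mult_mono)
  then show ?thesis by (simp add: mult_ac)
qed

text \<open>The density is integrable on \<open>(0,X)\<close>: it is dominated by a multiple of the
  integrable singularity \<open>t powr (\<nu> - 1)\<close>, using a maximum of \<open>g\<close> on \<open>[0,X]\<close>.\<close>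

lemma hdens_set_integrable:
  assumes g: "continuous_on UNIV g" and X: "X > 0" and \<nu>: "0 < \<nu>" "\<nu> \<le> \<mu>"
  shows "set_integrable lborel {0<..<X} (hdens \<mu> \<nu> g)"
proof -
  have "\<exists>x0\<in>{0..X}. \<forall>t\<in>{0..X}. g t \<le> g x0"
    using X by (intro continuous_attains_sup continuous_on_subset[OF g]) auto
  then obtain x0 where S: "\<forall>t\<in>{0..X}. g t \<le> g x0" by blast
  define M where "M = (X\<^sup>2 + 1) powr ((\<mu> - \<nu>) / 2) * exp (g x0)"
  have "set_integrable lborel {0<..<X} (\<lambda>t. M * t powr (\<nu> - 1))"
    using powr_set_integral(1)[OF \<nu>(1) X] by simp
  moreover have "set_borel_measurable lborel {0<..<X} (hdens \<mu> \<nu> g)"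
    using borel_measurable_continuous_onI[OF g]
    unfolding set_borel_measurable_def hdens_def[abs_def] by measurable
  moreover have "AE t in lborel. t \<in> {0<..<X} \<longrightarrow> norm (hdens \<mu> \<nu> g t) \<le> norm (M * t powr (\<nu> - 1))"
  proof (intro AE_I2 impI)
    fix t :: real assume t: "t \<in> {0<..<X}"
    then have "hdens \<mu> \<nu> g t \<le> M * t powr (\<nu> - 1)"
      unfolding M_def using \<nu> S by (intro hdens_le_powr) auto
    then show "norm (hdens \<mu> \<nu> g t) \<le> norm (M * t powr (\<nu> - 1))"
      using hdens_nonneg[of \<mu> \<nu> g t] by simp
  qed
  ultimately show ?thesis by (rule set_integrable_bound)
qed

lemma hinv_le_sup_bound:
  assumes g: "continuous_on UNIV g" and X: "X > 0" and \<nu>: "0 < \<nu>" "\<nu> \<le> \<mu>"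
    and S: "\<And>t. 0 < t \<Longrightarrow> t < X \<Longrightarrow> g t \<le> S"
  shows "hinv \<mu> \<nu> g X \<le> (1/\<nu>) * X powr \<nu> * (X\<^sup>2 + 1) powr ((\<mu> - \<nu>) / 2) * exp S"
proof -
  have "hinv \<mu> \<nu> g X \<le> ((X\<^sup>2 + 1) powr ((\<mu> - \<nu>) / 2) * exp S) * (X powr \<nu> / \<nu>)"
    unfolding hinv_eq_set_integral[OF X]
    using \<nu> S by (intro set_integral_le_powr[OF \<nu>(1) X hdens_set_integrable[OF g X \<nu>]] hdens_le_powr)
      auto
  then show ?thesis by (simp add: field_simps)
qed

text \<open>\<open>ln (t\<^sup>2 + 1) - 2 ln t = ln (1 + 1/t\<^sup>2)\<close> is decreasing on \<open>(0,\<infinity>)\<close>.\<close>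

lemma ln_sq_plus_one_minus_two_ln_antimono:
  fixes t X :: real assumes "0 < t" "t \<le> X"
  shows "ln (X\<^sup>2 + 1) - 2 * ln X \<le> ln (t\<^sup>2 + 1) - 2 * ln t"
proof -
  have eq: "ln (s\<^sup>2 + 1) - 2 * ln s = ln (1 + 1 / s\<^sup>2)" if "s > 0" for s :: real
  proof -
    have "ln (1 + 1 / s\<^sup>2) = ln ((s\<^sup>2 + 1) / s\<^sup>2)" using that by (simp add: field_simps)
    also have "\<dots> = ln (s\<^sup>2 + 1) - ln (s\<^sup>2)"
      using that by (intro ln_divide_pos) (auto intro: add_nonneg_pos)
    also have "ln (s\<^sup>2) = 2 * ln s" using that by (simp add: ln_realpow)
    finally show ?thesis by simp
  qed
  have "1 / X\<^sup>2 \<le> 1 / t\<^sup>2" using assms by (intro divide_left_mono power_mono) auto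
  moreover have "0 < 1 + 1 / X\<^sup>2" by (intro add_pos_nonneg) auto
  ultimately have "ln (1 + 1 / X\<^sup>2) \<le> ln (1 + 1 / t\<^sup>2)" by simp
  then show ?thesis using assms by (simp add: eq)
qed

lemma exp_log_linear_le_hdens:
  assumes t: "0 < t" "t \<le> X" and \<nu>: "\<nu> \<le> \<mu>"
  shows "exp ((\<nu> - 1) * ln X + (\<mu> - \<nu>) / 2 * ln (X\<^sup>2 + 1) + (1 - \<mu>) * - ln (t / X) + g t)
           \<le> hdens \<mu> \<nu> g t"
proof -
  define c where "c = (\<mu> - \<nu>) / 2"
  have decr: "c * (ln (X\<^sup>2 + 1) - 2 * ln X) \<le> c * (ln (t\<^sup>2 + 1) - 2 * ln t)"
    using t \<nu> ln_sq_plus_one_minus_two_ln_antimono[of t X] by (intro mult_left_mono) (auto simp: c_def)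
  have ln_quot: "ln (t / X) = ln t - ln X" using t by (simp add: ln_div)
  have exponent: "1 - \<mu> = - ((\<nu> - 1) + 2 * c)" by (simp add: c_def field_simps)
  have "(\<nu> - 1) * ln X + c * ln (X\<^sup>2 + 1) + (1 - \<mu>) * - ln (t / X) + g t
          \<le> (\<nu> - 1) * ln t + c * ln (t\<^sup>2 + 1) + g t"
    using decr unfolding ln_quot exponent by (simp add: algebra_simps)
  also have "exp \<dots> = hdens \<mu> \<nu> g t"
    using t zero_le_power2[of t]
    by (simp add: hdens_def powr_def exp_add c_def mult_ac add_nonneg_eq_0_iff)
  finally show ?thesis by (simp add: c_def)
qed

text \<open>Lower bound of part (1) for \<open>X > 0\<close>: Jensen applied to
  \<open>\<phi>(t) = K + (1 - \<mu>) (-ln (t/X)) + g t \<le> ln f(t)\<close>, whose mean is \<open>K + 1 - \<mu> + avg g\<close>.\<close>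

lemma hinv_ge_avg0_bound:
  assumes g: "continuous_on UNIV g" and X: "X > 0" and \<nu>: "0 < \<nu>" "\<nu> \<le> \<mu>"
  shows "exp (-(\<mu> - 1)) * X powr \<nu> * (X\<^sup>2 + 1) powr ((\<mu> - \<nu>) / 2) * exp (avg0 g X)
           \<le> hinv \<mu> \<nu> g X"
proof -
  define c where "c = (\<mu> - \<nu>) / 2"
  define K where "K = (\<nu> - 1) * ln X + c * ln (X\<^sup>2 + 1)"
  define \<phi> where "\<phi> t = K + (1 - \<mu>) * - ln (t / X) + g t" for t
  have gI: "set_integrable lborel {0<..<X} g"
    by (rule continuous_set_integrable_Ioo[OF g])
  have KI: "set_integrable lborel {0<..<X} (\<lambda>t. K)"
    using X unfolding set_integrable_def by auto
  have lnI: "set_integrable lborel {0<..<X} (\<lambda>t. (1 - \<mu>) * - ln (t / X))"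
    by (rule set_integrable_mult_right) (rule neg_ln_set_integral(1)[OF X])
  have \<phi>I: "set_integrable lborel {0<..<X} \<phi>"
    unfolding \<phi>_def[abs_def] using KI lnI gI by (intro set_integral_add)
  have "(LINT t:{0<..<X}|lborel. \<phi> t) = (LINT t:{0<..<X}|lborel. K)
      + (LINT t:{0<..<X}|lborel. (1 - \<mu>) * - ln (t / X)) + (LINT t:{0<..<X}|lborel. g t)"
    unfolding \<phi>_def
    by (simp only: set_integral_add(2)[OF set_integral_add(1)[OF KI lnI] gI] set_integral_add(2)[OF KI lnI])
  also have "\<dots> = X * K + (1 - \<mu>) * X + X * avg0 g X"
    using X avg0_eq_set_integral[OF X, of g]
    by (simp only: set_integral_mult_right neg_ln_set_integral(2)[OF X]) (simp add: set_integral_const)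
  finally have "(LINT t:{0<..<X}|lborel. \<phi> t) = X * K + (1 - \<mu>) * X + X * avg0 g X" .
  then have mean: "(LINT t:{0<..<X}|lborel. \<phi> t) / measure lborel {0<..<X} = K + 1 - \<mu> + avg0 g X"
    using X by (simp add: field_simps)
  have pointwise: "exp (\<phi> t) \<le> hdens \<mu> \<nu> g t" if "t \<in> {0<..<X}" for t
    using that \<nu> unfolding \<phi>_def K_def c_def by (intro exp_log_linear_le_hdens) auto
  have "measure lborel {0<..<X} * exp (K + 1 - \<mu> + avg0 g X) \<le> hinv \<mu> \<nu> g X"
    unfolding hinv_eq_set_integral[OF X] mean[symmetric]
    by (rule exp_average_le_set_integral[OF _ _ _ \<phi>I hdens_set_integrable[OF g X \<nu>] pointwise])
      (use X in auto)
  moreover have "X powr \<nu> = X * exp ((\<nu> - 1) * ln X)"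
    using X by (simp add: powr_def exp_diff algebra_simps)
  moreover have "(X\<^sup>2 + 1) powr ((\<mu> - \<nu>) / 2) = exp (c * ln (X\<^sup>2 + 1))"
    using zero_le_power2[of X] by (simp add: powr_def c_def mult_ac add_nonneg_eq_0_iff)
  ultimately show ?thesis
    using X by (simp add: K_def exp_add exp_diff exp_minus field_simps)
qed

lemma avg0_ge_lower_bound:
  assumes g: "continuous_on UNIV g" and X: "X > 0" and S: "\<And>t. 0 < t \<Longrightarrow> t < X \<Longrightarrow> - S \<le> g t"
  shows "- S \<le> avg0 g X"
proof -
  have gI: "set_integrable lborel {0<..<X} g"
    by (rule continuous_set_integrable_Ioo[OF g])
  have "X * (- S) = (LINT t:{0<..<X}|lborel. - S)"
    using X by (simp add: set_integral_const)
  also have "\<dots> \<le> (LINT t:{0<..<X}|lborel. g t)"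
    using X S by (intro set_integral_mono[OF _ gI]) (auto simp: set_integrable_def)
  finally show ?thesis unfolding avg0_eq_set_integral[OF X] using X by (simp add: field_simps)
qed

lemma hinv_bounds_pos:
  assumes g: "continuous_on UNIV g" and bound: "\<And>t. \<bar>g t\<bar> \<le> S"
    and X: "X > 0" and \<nu>: "0 < \<nu>" "\<nu> \<le> \<mu>"
  shows "\<bar>hinv \<mu> \<nu> g X\<bar> \<le> (1/\<nu>) * X powr \<nu> * (X\<^sup>2 + 1) powr ((\<mu> - \<nu>) / 2) * exp S
     \<and> exp (-(\<mu> - 1)) * X powr \<nu> * (X\<^sup>2 + 1) powr ((\<mu> - \<nu>) / 2) * exp (avg0 g X) \<le> \<bar>hinv \<mu> \<nu> g X\<bar>
     \<and> - S \<le> avg0 g X"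
proof -
  have lower: "exp (-(\<mu> - 1)) * X powr \<nu> * (X\<^sup>2 + 1) powr ((\<mu> - \<nu>) / 2) * exp (avg0 g X) \<le> hinv \<mu> \<nu> g X"
    by (rule hinv_ge_avg0_bound[OF g X \<nu>])
  moreover have "0 \<le> exp (-(\<mu> - 1)) * X powr \<nu> * (X\<^sup>2 + 1) powr ((\<mu> - \<nu>) / 2) * exp (avg0 g X)"
    by simp
  ultimately have "\<bar>hinv \<mu> \<nu> g X\<bar> = hinv \<mu> \<nu> g X" by linarith
  moreover have "g t \<le> S" "- S \<le> g t" for t using bound[of t] by auto
  ultimately show ?thesis
    using lower hinv_le_sup_bound[OF g X \<nu>] avg0_ge_lower_bound[OF g X] by simp
qed

text \<open>Part (2) for \<open>X > 0\<close>: monotonicity of \<open>G\<close> gives \<open>f t \<le> exp (G X) t powr (\<nu> - 1)\<close>, and the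
  growth bound gives \<open>f t \<ge> exp (G X - (\<mu> - \<nu>) (ln X + 2)) t powr (\<mu> - 1)\<close>.\<close>

lemma hinv_le_monotone_bound:
  assumes g: "continuous_on UNIV g" and X: "X > 0" and \<nu>: "0 < \<nu>" "\<nu> \<le> \<mu>"
    and mono: "\<And>t. 0 < t \<Longrightarrow> t < X \<Longrightarrow> bigG \<mu> \<nu> g t \<le> bigG \<mu> \<nu> g X"
  shows "hinv \<mu> \<nu> g X \<le> exp (bigG \<mu> \<nu> g X) * (X powr \<nu> / \<nu>)"
  unfolding hinv_eq_set_integral[OF X]
proof (rule set_integral_le_powr[OF \<nu>(1) X hdens_set_integrable[OF g X \<nu>]])
  fix t :: real assume t: "0 < t" "t < X"
  then have "exp (bigG \<mu> \<nu> g t) \<le> exp (bigG \<mu> \<nu> g X)" using mono by simp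
  then show "hdens \<mu> \<nu> g t \<le> exp (bigG \<mu> \<nu> g X) * t powr (\<nu> - 1)"
    using t by (simp add: hdens_eq_exp_bigG mult.commute mult_left_mono)
qed

lemma hinv_ge_growth_bound:
  assumes g: "continuous_on UNIV g" and X: "X > 0" and \<nu>: "0 < \<nu>" "\<nu> \<le> \<mu>"
    and growth: "\<And>t. 0 < t \<Longrightarrow> t < X \<Longrightarrow>
                   bigG \<mu> \<nu> g X - bigG \<mu> \<nu> g t \<le> (\<mu> - \<nu>) * (ln (X / t) + 2)"
  shows "exp (bigG \<mu> \<nu> g X - (\<mu> - \<nu>) * (ln X + 2)) * (X powr \<mu> / \<mu>) \<le> hinv \<mu> \<nu> g X"
  unfolding hinv_eq_set_integral[OF X]
proof (rule set_integral_ge_powr[OF _ X hdens_set_integrable[OF g X \<nu>]])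
  show "\<mu> > 0" using \<nu> by simp
  fix t :: real assume t: "0 < t" "t < X"
  define E where "E = bigG \<mu> \<nu> g X - (\<mu> - \<nu>) * (ln X + 2)"
  have "E + (\<mu> - \<nu>) * ln t \<le> bigG \<mu> \<nu> g t"
    using growth[OF t] t X by (simp add: E_def ln_div algebra_simps)
  then have "exp E * t powr (\<mu> - \<nu>) \<le> exp (bigG \<mu> \<nu> g t)"
    using t by (simp add: powr_def exp_add[symmetric] mult.commute)
  then have "t powr (\<nu> - 1) * (exp E * t powr (\<mu> - \<nu>)) \<le> t powr (\<nu> - 1) * exp (bigG \<mu> \<nu> g t)"
    by (rule mult_left_mono) simp
  moreover have "t powr (\<mu> - 1) = t powr (\<nu> - 1) * t powr (\<mu> - \<nu>)"
    by (simp add: powr_add[symmetric])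
  ultimately have "exp E * t powr (\<mu> - 1) \<le> t powr (\<nu> - 1) * exp (bigG \<mu> \<nu> g t)"
    by (simp add: mult_ac)
  then show "exp E * t powr (\<mu> - 1) \<le> hdens \<mu> \<nu> g t"
    using t by (simp add: hdens_eq_exp_bigG)
qed

text \<open>The numerical constant of part (2):
  \<open>\<mu> exp (1 - \<nu> - 6 (\<mu> - \<nu>)) \<le> exp (- 2 (\<mu> - \<nu>))\<close>, i.e.
  \<open>\<mu> \<le> exp (4 \<mu> - 3 \<nu> - 1)\<close>, which follows from \<open>exp y \<ge> 1 + y\<close>.\<close>

lemma part2_constant_bound:
  fixes \<mu> \<nu> :: real assumes "\<nu> \<le> \<mu>"
  shows "exp (1 - \<nu> - 6 * (\<mu> - \<nu>)) * \<mu> \<le> exp (- 2 * (\<mu> - \<nu>))"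
proof -
  have "\<mu> \<le> 1 + (4 * \<mu> - 3 * \<nu> - 1)" using assms by simp
  also have "\<dots> \<le> exp (4 * \<mu> - 3 * \<nu> - 1)" by (rule exp_ge_add_one_self)
  finally have "exp (1 - \<nu> - 6 * (\<mu> - \<nu>)) * \<mu> \<le> exp (1 - \<nu> - 6 * (\<mu> - \<nu>)) * exp (4 * \<mu> - 3 * \<nu> - 1)"
    by simp
  also have "\<dots> = exp (- 2 * (\<mu> - \<nu>))" by (simp add: exp_add[symmetric] algebra_simps)
  finally show ?thesis .
qed

lemma hinv_div_bounds_pos:
  assumes g: "continuous_on UNIV g" and X: "X > 0" and \<nu>: "0 < \<nu>" "\<nu> \<le> \<mu>"
    and mono: "\<And>t. 0 < t \<Longrightarrow> t < X \<Longrightarrow> bigG \<mu> \<nu> g t \<le> bigG \<mu> \<nu> g X"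
    and growth: "\<And>t. 0 < t \<Longrightarrow> t < X \<Longrightarrow>
                   bigG \<mu> \<nu> g X - bigG \<mu> \<nu> g t \<le> (\<mu> - \<nu>) * (ln (X / t) + 2)"
  shows "exp (1 - \<nu> - 6 * (\<mu> - \<nu>)) * \<bar>X\<bar> powr (\<nu> - 1) * (X\<^sup>2 + 1) powr ((\<mu> - \<nu>) / 2) * exp (g X)
           \<le> hinv \<mu> \<nu> g X / X"
    and "hinv \<mu> \<nu> g X / X
           \<le> (1/\<nu>) * \<bar>X\<bar> powr (\<nu> - 1) * (X\<^sup>2 + 1) powr ((\<mu> - \<nu>) / 2) * exp (g X)"
proof -
  have \<mu>: "\<mu> > 0" using \<nu> by simp
  define Q where "Q = X powr (\<nu> - 1) * exp (bigG \<mu> \<nu> g X)"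
  have Q: "C * \<bar>X\<bar> powr (\<nu> - 1) * (X\<^sup>2 + 1) powr ((\<mu> - \<nu>) / 2) * exp (g X) = C * Q" for C
    using X by (simp add: Q_def mult.assoc weight_eq_exp_bigG)
  have "exp (1 - \<nu> - 6 * (\<mu> - \<nu>)) * Q \<le> (exp (- 2 * (\<mu> - \<nu>)) / \<mu>) * Q"
    using part2_constant_bound[OF \<nu>(2)] \<mu>
    by (intro mult_right_mono) (simp_all add: Q_def field_simps)
  also have "\<dots> = exp (bigG \<mu> \<nu> g X - (\<mu> - \<nu>) * (ln X + 2)) * (X powr \<mu> / \<mu>) / X"
    using X by (simp add: Q_def powr_def exp_add exp_diff field_simps)
  also have "\<dots> \<le> hinv \<mu> \<nu> g X / X"
    by (rule divide_right_mono[OF hinv_ge_growth_bound[OF g X \<nu> growth]]) (use X in auto)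
  finally show "exp (1 - \<nu> - 6 * (\<mu> - \<nu>)) * \<bar>X\<bar> powr (\<nu> - 1) * (X\<^sup>2 + 1) powr ((\<mu> - \<nu>) / 2) * exp (g X)
           \<le> hinv \<mu> \<nu> g X / X" by (simp only: Q)
  have "hinv \<mu> \<nu> g X / X \<le> exp (bigG \<mu> \<nu> g X) * (X powr \<nu> / \<nu>) / X"
    by (rule divide_right_mono[OF hinv_le_monotone_bound[OF g X \<nu> mono]]) (use X in auto)
  also have "\<dots> = (1/\<nu>) * Q"
    using X by (simp add: Q_def powr_diff)
  finally show "hinv \<mu> \<nu> g X / X
           \<le> (1/\<nu>) * \<bar>X\<bar> powr (\<nu> - 1) * (X\<^sup>2 + 1) powr ((\<mu> - \<nu>) / 2) * exp (g X)"
    by (simp only: Q)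
qed

section \<open>Reflection\<close>

lemma hinv_reflect: "hinv \<mu> \<nu> g x = - hinv \<mu> \<nu> (\<lambda>t. g (- t)) (- x)"
proof -
  have "hinv \<mu> \<nu> g x = (LBINT t=ereal (- x)..ereal 0.
      \<bar>- t\<bar> powr (\<nu> - 1) * ((- t)\<^sup>2 + 1) powr ((\<mu> - \<nu>) / 2) * exp (g (- t)))"
    unfolding hinv_def by (subst interval_integral_reflect) simp
  also have "\<dots> = - hinv \<mu> \<nu> (\<lambda>t. g (- t)) (- x)"
    unfolding hinv_def by (subst interval_integral_endpoints_reverse) simp
  finally show ?thesis .
qed

lemma avg0_reflect:
  assumes "x \<noteq> 0" shows "avg0 g x = avg0 (\<lambda>t. g (- t)) (- x)"
proof -
  have "(LBINT t=ereal 0..ereal x. g t) = (LBINT t=ereal (- x)..ereal 0. g (- t))"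
    by (subst interval_integral_reflect) simp
  also have "\<dots> = - (LBINT t=ereal 0..ereal (- x). g (- t))"
    by (subst interval_integral_endpoints_reverse) simp
  finally show ?thesis using assms unfolding avg0_def by simp
qed

lemma spaceX_abs_le_supnorm:
  assumes "g \<in> spaceX" shows "\<bar>g t\<bar> \<le> supnorm g"
proof -
  from assms have "bounded (range g)" by (simp add: spaceX_def)
  then obtain B where "\<And>x. \<bar>g x\<bar> \<le> B" unfolding bounded_iff by auto
  then have "bdd_above (range (\<lambda>x. \<bar>g x\<bar>))" by (intro bdd_aboveI2)
  then show ?thesis unfolding supnorm_def by (rule cSUP_upper[rotated]) simp
qed

lemma hinv_bounds_spaceX:
  assumes g: "g \<in> spaceX" and \<nu>: "0 < \<nu>" "\<nu> \<le> \<mu>"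
  shows "\<bar>hinv \<mu> \<nu> g x\<bar> \<le> (1/\<nu>) * \<bar>x\<bar> powr \<nu> * (x\<^sup>2 + 1) powr ((\<mu> - \<nu>) / 2) * exp (supnorm g)
     \<and> \<bar>hinv \<mu> \<nu> g x\<bar> \<ge> exp (-(\<mu> - 1)) * \<bar>x\<bar> powr \<nu> * (x\<^sup>2 + 1) powr ((\<mu> - \<nu>) / 2) * exp (avg0 g x)
     \<and> exp (-(\<mu> - 1)) * \<bar>x\<bar> powr \<nu> * (x\<^sup>2 + 1) powr ((\<mu> - \<nu>) / 2) * exp (avg0 g x)
         \<ge> exp (-(\<mu> - 1)) * \<bar>x\<bar> powr \<nu> * (x\<^sup>2 + 1) powr ((\<mu> - \<nu>) / 2) * exp (- supnorm g)"
proof -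
  define S where "S = supnorm g"
  have cg: "continuous_on UNIV g" using g by (simp add: spaceX_def)
  have bound: "\<And>t. \<bar>g t\<bar> \<le> S" unfolding S_def using spaceX_abs_le_supnorm[OF g] .
  have "\<bar>hinv \<mu> \<nu> g x\<bar> \<le> (1/\<nu>) * \<bar>x\<bar> powr \<nu> * (x\<^sup>2 + 1) powr ((\<mu> - \<nu>) / 2) * exp S
     \<and> exp (-(\<mu> - 1)) * \<bar>x\<bar> powr \<nu> * (x\<^sup>2 + 1) powr ((\<mu> - \<nu>) / 2) * exp (avg0 g x) \<le> \<bar>hinv \<mu> \<nu> g x\<bar>
     \<and> - S \<le> avg0 g x"
  proof (cases x "0::real" rule: linorder_cases)
    case less
    have cg': "continuous_on UNIV (\<lambda>t. g (- t))"
      by (rule continuous_on_compose2[OF cg]) (auto intro!: continuous_intros)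
    have "\<bar>hinv \<mu> \<nu> g x\<bar> = \<bar>hinv \<mu> \<nu> (\<lambda>t. g (- t)) (- x)\<bar>" by (subst hinv_reflect) simp
    moreover have "avg0 g x = avg0 (\<lambda>t. g (- t)) (- x)" using less by (intro avg0_reflect) simp
    moreover have "\<bar>x\<bar> = - x" "x\<^sup>2 = (- x)\<^sup>2" using less by auto
    ultimately show ?thesis
      using hinv_bounds_pos[OF cg' bound, of "- x"] less \<nu> by simp
  next
    case equal
    then show ?thesis using bound[of 0] by (simp add: hinv_def avg0_def)
  next
    case greater
    then show ?thesis using hinv_bounds_pos[OF cg bound greater \<nu>] by simp
  qed
  then show ?thesis unfolding S_def by (auto intro!: mult_left_mono)
qed

lemma spaceX1_props:
  assumes "g \<in> spaceX1 \<mu> \<nu>"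
  shows "g \<in> spaceX"
    and "g (- t) = g t"
    and "0 < t \<Longrightarrow> t \<le> X \<Longrightarrow> bigG \<mu> \<nu> g t \<le> bigG \<mu> \<nu> g X"
    and "0 < t \<Longrightarrow> t \<le> X \<Longrightarrow> bigG \<mu> \<nu> g X - bigG \<mu> \<nu> g t \<le> (\<mu> - \<nu>) * (ln (X / t) + 2)"
proof -
  show "g \<in> spaceX" using assms by (simp add: spaceX1_def)
  have "bigG \<mu> \<nu> g (- t) = bigG \<mu> \<nu> g t" using assms by (simp add: spaceX1_def)
  then show "g (- t) = g t" by (simp add: bigG_def)
  show "0 < t \<Longrightarrow> t \<le> X \<Longrightarrow> bigG \<mu> \<nu> g t \<le> bigG \<mu> \<nu> g X"
    using assms unfolding spaceX1_def by force
  show "0 < t \<Longrightarrow> t \<le> X \<Longrightarrow> bigG \<mu> \<nu> g X - bigG \<mu> \<nu> g t \<le> (\<mu> - \<nu>) * (ln (X / t) + 2)"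
    using assms unfolding spaceX1_def by blast
qed

text \<open>Part (2) of the lemma, for a fixed \<open>g \<in> X\<^sub>1\<close>; since \<open>g\<close> is even,
  \<open>hinv g x / x\<close> only depends on \<open>|x|\<close>.\<close>

lemma hinv_div_bounds_spaceX1:
  assumes g: "g \<in> spaceX1 \<mu> \<nu>" and x: "x \<noteq> 0" and \<nu>: "0 < \<nu>" "\<nu> \<le> \<mu>"
  shows "exp (1 - \<nu> - 6 * (\<mu> - \<nu>)) * \<bar>x\<bar> powr (\<nu> - 1) * (x\<^sup>2 + 1) powr ((\<mu> - \<nu>) / 2) * exp (g x)
           \<le> hinv \<mu> \<nu> g x / x
       \<and> hinv \<mu> \<nu> g x / x
           \<le> (1/\<nu>) * \<bar>x\<bar> powr (\<nu> - 1) * (x\<^sup>2 + 1) powr ((\<mu> - \<nu>) / 2) * exp (g x)"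
proof -
  define X where "X = \<bar>x\<bar>"
  have X: "X > 0" using x by (simp add: X_def)
  have cg: "continuous_on UNIV g" using spaceX1_props(1)[OF g] by (simp add: spaceX_def)
  have even: "(\<lambda>t. g (- t)) = g" using spaceX1_props(2)[OF g] by auto
  have "hinv \<mu> \<nu> g x / x = hinv \<mu> \<nu> g X / X"
    using hinv_reflect[of \<mu> \<nu> g x] by (simp add: X_def even abs_if)
  moreover have "\<bar>x\<bar> = \<bar>X\<bar>" "x\<^sup>2 = X\<^sup>2" "g x = g X"
    using spaceX1_props(2)[OF g, of x] by (auto simp: X_def abs_if)
  ultimately show ?thesis
    using hinv_div_bounds_pos[OF cg X \<nu> spaceX1_props(3,4)[OF g]] by simp
qed

theorem lemma5p2:
  fixes \<mu> \<nu> :: real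
  assumes "\<mu> > 1/2" and "0 < \<nu>" and "\<nu> < 1/2"
  shows "(\<forall>g \<in> spaceX. \<forall>x::real.
            \<bar>hinv \<mu> \<nu> g x\<bar> \<le> (1/\<nu>) * \<bar>x\<bar> powr \<nu> * (x\<^sup>2 + 1) powr ((\<mu> - \<nu>) / 2) * exp (supnorm g)
          \<and> \<bar>hinv \<mu> \<nu> g x\<bar> \<ge> exp (-(\<mu> - 1)) * \<bar>x\<bar> powr \<nu> * (x\<^sup>2 + 1) powr ((\<mu> - \<nu>) / 2) * exp (avg0 g x)
          \<and> exp (-(\<mu> - 1)) * \<bar>x\<bar> powr \<nu> * (x\<^sup>2 + 1) powr ((\<mu> - \<nu>) / 2) * exp (avg0 g x)
              \<ge> exp (-(\<mu> - 1)) * \<bar>x\<bar> powr \<nu> * (x\<^sup>2 + 1) powr ((\<mu> - \<nu>) / 2) * exp (- supnorm g))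
       \<and> (\<forall>g \<in> spaceX1 \<mu> \<nu>. \<forall>x::real. x \<noteq> 0 \<longrightarrow>
            exp (1 - \<nu> - 6 * (\<mu> - \<nu>)) * \<bar>x\<bar> powr (\<nu> - 1) * (x\<^sup>2 + 1) powr ((\<mu> - \<nu>) / 2) * exp (g x)
              \<le> hinv \<mu> \<nu> g x / x
          \<and> hinv \<mu> \<nu> g x / x
              \<le> (1/\<nu>) * \<bar>x\<bar> powr (\<nu> - 1) * (x\<^sup>2 + 1) powr ((\<mu> - \<nu>) / 2) * exp (g x))"
proof -
  \<comment> \<open>The hypotheses on \<open>\<mu>, \<nu>\<close> are only used through \<open>0 < \<nu> \<le> \<mu>\<close>.\<close>
  have \<nu>: "0 < \<nu>" "\<nu> \<le> \<mu>" using assms by auto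
  show ?thesis
    using hinv_bounds_spaceX[OF _ \<nu>] hinv_div_bounds_spaceX1[OF _ _ \<nu>] by blast
qed

end
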